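(* Let $a,b,c,d$ be integers with $a\le c$ and $b\ge d$. Then $$\mathrm{gf}(a,b,c,d)=\prod_{j=1}^{c-a}\frac{\left(Xq^{j-1-2b+a}+Yq^{-j+1+2d-a}\right)\left(1-q^{2(b-d)+2j}\right)}{2\left(1-q^{2j}\right)}.$$ In particular, specializing $X=Y=1$, $$\mathrm{gf}(a,b,c,d)\big|_{X=Y=1}=2^{a-c}q^{\frac12(a-c)(a+c-1-4d)}\frac{(-q^{2a-2b-2d};q^2)_{c-a}\,(q^{2b-2d+2};q^2)_{c-a}}{(q^2;q^2)_{c-a}}.$$
   Context: $X,Y,q$ are indeterminates and $(u;p)_n=\prod_{j=0}^{n-1}(1-up^j)$. Consider lattice paths in $\mathbb Z\times\mathbb Z$ using unit steps to the right, $(s,t)\to(s+1,t)$, and downward, $(s,t)\to(s,t-1)$. A right step from $(s,t)$ to $(s+1,t)$ has weight $\frac{Xq^{s-2t}+Yq^{2t-s}}{2}$, a down step has weight $1$, and the weight of a path is the product of the weights of its steps. $\mathrm{gf}(a,b,c,d)$ denotes the sum of weights of all such paths from $(a,b)$ to $(c,d)$. *)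

theory Defs
  imports Complex_Main
begin

text \<open>A lattice path is encoded by its list of steps starting from a given point:
  True = right step (s,t) to (s+1,t), False = down step (s,t) to (s,t-1).\<close>

fun path_end :: "int \<times> int \<Rightarrow> bool list \<Rightarrow> int \<times> int" where
  "path_end (s,t) [] = (s,t)"
| "path_end (s,t) (True # ps) = path_end (s+1,t) ps"
| "path_end (s,t) (False # ps) = path_end (s,t-1) ps"

fun path_weight :: "'a::field \<Rightarrow> 'a \<Rightarrow> 'a \<Rightarrow> int \<times> int \<Rightarrow> bool list \<Rightarrow> 'a" where
  "path_weight X Y q (s,t) [] = 1"
| "path_weight X Y q (s,t) (True # ps) =
     (X * q powi (s - 2*t) + Y * q powi (2*t - s)) / 2 * path_weight X Y q (s+1,t) ps"
| "path_weight X Y q (s,t) (False # ps) = path_weight X Y q (s,t-1) ps"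

definition lattice_paths :: "int \<Rightarrow> int \<Rightarrow> int \<Rightarrow> int \<Rightarrow> bool list set" where
  "lattice_paths a b c d = {ps. path_end (a,b) ps = (c,d)}"

definition gf :: "'a::field \<Rightarrow> 'a \<Rightarrow> 'a \<Rightarrow> int \<Rightarrow> int \<Rightarrow> int \<Rightarrow> int \<Rightarrow> 'a" where
  "gf X Y q a b c d = (\<Sum>ps\<in>lattice_paths a b c d. path_weight X Y q (a,b) ps)"

definition qpoch :: "'a::comm_ring_1 \<Rightarrow> 'a \<Rightarrow> nat \<Rightarrow> 'a" where
  "qpoch u p n = (\<Prod>j<n. 1 - u * p ^ j)"

end

theory Submission
  imports Defs
begin

text \<open>Sorting paths by their last step gives the recurrence
  gf(c,d) = gf(c,d+1) + w(c-1,d) gf(c-1,d), where w(s,t) is the weight of a right step from (s,t).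
  That weight depends only on s - 2t, so moving the start to the origin merely rescales X and Y.
  With its denominators 2^n (q^2;q^2)_n cleared, the closed form satisfies the same recurrence
  (by a two-term q-identity) and the same boundary values, so a double induction on the width n
  and the depth m proves it. For X = Y = 1 the product rearranges into q-Pochhammer symbols.\<close>

lemma path_end_append: "path_end st (xs @ ys) = path_end (path_end st xs) ys"
proof (induction xs arbitrary: st)
  case Nil then show ?case by (cases st) simp
next
  case (Cons x xs) then show ?case by (cases st; cases x) auto
qed

lemma path_weight_append:
  "path_weight X Y q st (xs @ ys) = path_weight X Y q st xs * path_weight X Y q (path_end st xs) ys"
proof (induction xs arbitrary: st)
  case Nil then show ?case by (cases st) simp
next
  case (Cons x xs) then show ?case by (cases st; cases x) (auto simp: mult.assoc)
qed

lemma path_end_eq: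
  "path_end (s,t) ps = (s + int (count_list ps True), t - int (count_list ps False))"
  by (induction ps arbitrary: s t rule: path_end.induct) auto

lemma length_lattice_path:
  assumes "ps \<in> lattice_paths a b c d"
  shows "int (length ps) = (c - a) + (b - d)" "a \<le> c" "d \<le> b"
proof -
  have "length ps = count_list ps True + count_list ps False"
    by (induction ps) auto
  then show "int (length ps) = (c - a) + (b - d)" "a \<le> c" "d \<le> b"
    using assms path_end_eq[of a b ps] by (auto simp: lattice_paths_def)
qed

lemma finite_lattice_paths: "finite (lattice_paths a b c d)"
proof (rule finite_subset)
  show "lattice_paths a b c d
      \<subseteq> {ps. set ps \<subseteq> UNIV \<and> length ps = nat ((c - a) + (b - d))}"
    using length_lattice_path by fastforce
qed (rule finite_lists_length_eq, simp)

lemma lattice_paths_empty: "c < a \<or> b < d \<Longrightarrow> lattice_paths a b c d = {}"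
  using length_lattice_path by fastforce

lemma lattice_paths_refl: "lattice_paths a b a b = {[]}"
  using length_lattice_path(1)[of _ a b a b] by (auto simp: lattice_paths_def)

lemma lattice_paths_last_step:
  assumes "(c,d) \<noteq> (a,b)"
  shows "lattice_paths a b c d = (\<lambda>ps. ps @ [False]) ` lattice_paths a b c (d+1)
           \<union> (\<lambda>ps. ps @ [True]) ` lattice_paths a b (c-1) d"
proof
  show "lattice_paths a b c d \<subseteq> (\<lambda>ps. ps @ [False]) ` lattice_paths a b c (d+1)
           \<union> (\<lambda>ps. ps @ [True]) ` lattice_paths a b (c-1) d"
  proof
    fix ps assume ps: "ps \<in> lattice_paths a b c d"
    with assms have "ps \<noteq> []" by (auto simp: lattice_paths_def)
    then obtain xs x where "ps = xs @ [x]" by (metis append_butlast_last_id)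
    with ps show "ps \<in> (\<lambda>ps. ps @ [False]) ` lattice_paths a b c (d+1)
           \<union> (\<lambda>ps. ps @ [True]) ` lattice_paths a b (c-1) d"
      by (cases x; cases "path_end (a,b) xs") (auto simp: lattice_paths_def path_end_append)
  qed
qed (auto simp: lattice_paths_def path_end_append)

lemma gf_last_step:
  assumes "(c,d) \<noteq> (a,b)"
  shows "gf X Y q a b c d = gf X Y q a b c (d+1)
    + (X * q powi (c - 1 - 2*d) + Y * q powi (2*d - (c - 1))) / 2 * gf X Y q a b (c-1) d"
proof -
  let ?w = "path_weight X Y q (a,b)"
  have [simp]: "path_weight X Y q st [False] = 1" for st by (cases st) simp
  have inj: "inj_on (\<lambda>ps. ps @ [x]) A" for x :: bool and A by (simp add: inj_on_def)
  have "gf X Y q a b c d = (\<Sum>ps\<in>(\<lambda>ps. ps @ [False]) ` lattice_paths a b c (d+1). ?w ps)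
      + (\<Sum>ps\<in>(\<lambda>ps. ps @ [True]) ` lattice_paths a b (c-1) d. ?w ps)"
    unfolding gf_def lattice_paths_last_step[OF assms]
    by (rule sum.union_disjoint) (auto simp: finite_lattice_paths)
  also have "(\<Sum>ps\<in>(\<lambda>ps. ps @ [False]) ` lattice_paths a b c (d+1). ?w ps)
      = gf X Y q a b c (d+1)"
    by (simp add: gf_def sum.reindex[OF inj] path_weight_append)
  also have "(\<Sum>ps\<in>(\<lambda>ps. ps @ [True]) ` lattice_paths a b (c-1) d. ?w ps)
      = (X * q powi (c - 1 - 2*d) + Y * q powi (2*d - (c - 1))) / 2 * gf X Y q a b (c-1) d"
    unfolding gf_def sum.reindex[OF inj] sum_distrib_left
    by (rule sum.cong) (auto simp: path_weight_append lattice_paths_def)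
  finally show ?thesis .
qed

lemma gf_eq_0: "c < a \<or> b < d \<Longrightarrow> gf X Y q a b c d = 0"
  by (simp add: gf_def lattice_paths_empty)

lemma gf_vertical: "d \<le> b \<Longrightarrow> gf X Y q a b a d = 1"
proof (induction "nat (b - d)" arbitrary: d)
  case 0
  then show ?case by (simp add: gf_def lattice_paths_refl)
next
  case (Suc k)
  then have "gf X Y q a b a (d + 1) = 1" by simp
  moreover have "gf X Y q a b (a - 1) d = 0" by (simp add: gf_eq_0)
  ultimately show ?case using gf_last_step[of a d a b X Y q] Suc by simp
qed

lemma path_weight_translate:
  fixes q :: "'a::field"
  assumes "q \<noteq> 0"
  shows "path_weight X Y q (s,t) ps
    = path_weight (X * q powi (a - 2*b)) (Y * q powi (2*b - a)) q (s - a, t - b) ps"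
proof (induction ps arbitrary: s t)
  case Nil then show ?case by simp
next
  case (Cons x ps)
  have "q powi (s - 2*t) = q powi (a - 2*b) * q powi (s - a - 2*(t - b))"
       "q powi (2*t - s) = q powi (2*b - a) * q powi (2*(t - b) - (s - a))"
    using assms by (simp_all flip: power_int_add)
  with Cons show ?case by (cases x) (simp_all add: diff_add_eq diff_right_commute mult.assoc)
qed

lemma gf_translate:
  fixes q :: "'a::field"
  assumes "q \<noteq> 0"
  shows "gf X Y q a b c d = gf (X * q powi (a - 2*b)) (Y * q powi (2*b - a)) q 0 0 (c - a) (d - b)"
proof -
  have "lattice_paths a b c d = lattice_paths 0 0 (c - a) (d - b)"
    by (auto simp: lattice_paths_def path_end_eq)
  then show ?thesis
    unfolding gf_def using path_weight_translate[OF assms, of X Y a b _ a b] by simp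
qed

text \<open>The recurrence for the closed form, after cancelling the factors common to all
  three terms.\<close>

lemma pascal_identity:
  fixes X Y q :: "'a::field"
  assumes "q \<noteq> 0"
  shows "(X * q^n + Y / q^(n + 2 * Suc m)) * (1 - (q^2)^Suc (Suc m) * (q^2)^n)
    = q^n * (X + Y / q^(2 * m)) * (1 - (q^2)^Suc m)
      + (X * q^(n + 2 * Suc m) + Y / q^(n + 2 * Suc m)) * (1 - (q^2)^Suc n)"
proof -
  have identity: "(X * u + Y / (q^2 * u * v^2)) * (1 - q^4 * u^2 * v^2)
      = u * (X + Y / v^2) * (1 - q^2 * v^2)
        + (X * (q^2 * u * v^2) + Y / (q^2 * u * v^2)) * (1 - q^2 * u^2)"
    if "u \<noteq> 0" "v \<noteq> 0" for u v
    using that assms by (simp add: field_simps) (simp add: algebra_simps eval_nat_numeral)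
  have sq: "(q^2)^k = (q^k)^2" for k by (metis power_mult mult.commute)
  have powers: "q^(n + 2 * Suc m) = q^2 * q^n * (q^m)^2" "q^(2 * m) = (q^m)^2"
    "(q^2)^Suc (Suc m) * (q^2)^n = q^4 * (q^n)^2 * (q^m)^2"
    "(q^2)^Suc m = q^2 * (q^m)^2" "(q^2)^Suc n = q^2 * (q^n)^2"
    unfolding sq
    by (simp_all add: power_add power_even_eq power_mult_distrib power2_eq_square power4_eq_xxxx)
  show ?thesis
    unfolding powers by (rule identity) (simp_all add: assms)
qed

lemma qpoch_Suc: "qpoch u p (Suc n) = qpoch u p n * (1 - u * p^n)"
  by (simp add: qpoch_def)

lemma qpoch_Suc_shift: "qpoch u p (Suc n) = (1 - u) * qpoch (u * p) p n"
  by (simp add: qpoch_def prod.lessThan_Suc_shift mult.assoc del: prod.lessThan_Suc)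

lemma prod_lessThan_Suc_shift_weights:
  fixes X Y q :: "'a::field"
  assumes "q \<noteq> 0"
  shows "(\<Prod>j<Suc n. X * q^j + Y / q^(j + 2*m))
    = q^n * (X + Y / q^(2*m)) * (\<Prod>j<n. X * q^j + Y / q^(j + 2 * Suc m))"
proof -
  have "X * q^Suc j + Y / q^(Suc j + 2*m) = q * (X * q^j + Y / q^(j + 2 * Suc m))" for j
    using assms by (simp add: field_simps)
  then show ?thesis
    by (simp add: prod.lessThan_Suc_shift prod.distrib mult.assoc del: prod.lessThan_Suc)
qed

lemma gf_origin_last_step:
  fixes X Y q :: "'a::field"
  shows "gf X Y q 0 0 (int (Suc n)) (- int m) = gf X Y q 0 0 (int (Suc n)) (1 - int m)
    + (X * q^(n + 2*m) + Y / q^(n + 2*m)) / 2 * gf X Y q 0 0 (int n) (- int m)"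
proof -
  have "int (Suc n) - 1 - 2 * - int m = int (n + 2*m)"
    "2 * - int m - (int (Suc n) - 1) = - int (n + 2*m)" "int (Suc n) - 1 = int n"
    "- int m + 1 = 1 - int m"
    by simp_all
  with gf_last_step[of "int (Suc n)" "- int m" 0 0 X Y q] show ?thesis
    by (simp only: power_int_of_nat power_int_minus divide_inverse) simp
qed

lemma gf_origin_closed_form:
  fixes X Y q :: "'a::field_char_0"
  assumes "q \<noteq> 0"
  shows "2^n * qpoch (q^2) (q^2) n * gf X Y q 0 0 (int n) (- int m)
    = (\<Prod>j<n. X * q^j + Y / q^(j + 2*m)) * qpoch ((q^2)^Suc m) (q^2) n"
proof (induction n arbitrary: m)
  case 0
  show ?case by (simp add: qpoch_def gf_vertical)
next
  case (Suc n)
  define A where "A k = (\<Prod>j<n. X * q^j + Y / q^(j + 2*k))" for k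
  define R where "R k = qpoch ((q^2)^Suc k) (q^2) n" for k
  define G where "G k = 2^n * qpoch (q^2) (q^2) n * gf X Y q 0 0 (int n) (- int k)" for k
  have IH: "G k = A k * R k" for k
    unfolding A_def R_def G_def by (rule Suc.IH)
  have recurrence: "2^Suc n * qpoch (q^2) (q^2) (Suc n) * gf X Y q 0 0 (int (Suc n)) (- int k)
      = 2^Suc n * qpoch (q^2) (q^2) (Suc n) * gf X Y q 0 0 (int (Suc n)) (1 - int k)
        + (X * q^(n + 2*k) + Y / q^(n + 2*k)) * (1 - (q^2)^Suc n) * G k" for k
  proof -
    have "2^Suc n * qpoch (q^2) (q^2) (Suc n) * gf X Y q 0 0 (int (Suc n)) (- int k)
      = 2^Suc n * qpoch (q^2) (q^2) (Suc n) * (gf X Y q 0 0 (int (Suc n)) (1 - int k)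
        + (X * q^(n + 2*k) + Y / q^(n + 2*k)) / 2 * gf X Y q 0 0 (int n) (- int k))"
      by (simp only: gf_origin_last_step)
    also have "\<dots> = 2^Suc n * qpoch (q^2) (q^2) (Suc n) * gf X Y q 0 0 (int (Suc n)) (1 - int k)
        + (X * q^(n + 2*k) + Y / q^(n + 2*k)) * (1 - (q^2)^Suc n) * G k"
      unfolding G_def qpoch_Suc using assms by (simp add: field_simps)
    finally show ?thesis .
  qed
  show ?case
  proof (induction m)
    case 0
    have "gf X Y q 0 0 (int (Suc n)) 1 = 0" by (simp add: gf_eq_0)
    then show ?case
      using recurrence[of 0] unfolding IH A_def R_def by (simp add: qpoch_Suc algebra_simps)
  next
    case (Suc m)
    have "2^Suc n * qpoch (q^2) (q^2) (Suc n) * gf X Y q 0 0 (int (Suc n)) (- int (Suc m))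
        = (\<Prod>j<Suc n. X * q^j + Y / q^(j + 2*m)) * qpoch ((q^2)^Suc m) (q^2) (Suc n)
          + (X * q^(n + 2 * Suc m) + Y / q^(n + 2 * Suc m)) * (1 - (q^2)^Suc n)
            * (A (Suc m) * R (Suc m))"
      using recurrence[of "Suc m"] Suc.IH by (simp add: IH)
    also have "\<dots> = (q^n * (X + Y / q^(2*m)) * (1 - (q^2)^Suc m)
           + (X * q^(n + 2 * Suc m) + Y / q^(n + 2 * Suc m)) * (1 - (q^2)^Suc n))
          * (A (Suc m) * R (Suc m))"
      unfolding A_def R_def prod_lessThan_Suc_shift_weights[OF assms]
        qpoch_Suc_shift[of "(q^2)^Suc m"]
      by (simp add: algebra_simps)
    also have "\<dots> = (X * q^n + Y / q^(n + 2 * Suc m)) * (1 - (q^2)^Suc (Suc m) * (q^2)^n)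
        * (A (Suc m) * R (Suc m))"
      by (simp only: pascal_identity[OF assms])
    also have "\<dots> = (\<Prod>j<Suc n. X * q^j + Y / q^(j + 2 * Suc m))
        * qpoch ((q^2)^Suc (Suc m)) (q^2) (Suc n)"
      unfolding A_def R_def qpoch_Suc by (simp add: algebra_simps)
    finally show ?case .
  qed
qed

lemma gf_closed_form:
  fixes X Y q :: "'a::field_char_0"
  assumes "q \<noteq> 0" and "c = a + int n" and "b = d + int m"
  shows "2^n * qpoch (q^2) (q^2) n * gf X Y q a b c d
    = (\<Prod>j<n. X * q powi (a - 2*b + int j) + Y * q powi (2*d - a - int j))
      * qpoch ((q^2)^Suc m) (q^2) n"
proof -
  have "X * q powi (a - 2*b) * q^j + Y * q powi (2*b - a) / q^(j + 2*m)
      = X * q powi (a - 2*b + int j) + Y * q powi (2*d - a - int j)" for j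
  proof -
    have "2*d - a - int j = (2*b - a) - int (j + 2*m)" using assms(3) by simp
    then have "q powi (2*d - a - int j) = q powi (2*b - a) / q^(j + 2*m)"
      by (simp only: power_int_diff[OF disjI1[OF assms(1)]] power_int_of_nat)
    moreover have "q powi (a - 2*b + int j) = q powi (a - 2*b) * q^j"
      using assms(1) by (simp add: power_int_add)
    ultimately show ?thesis by (simp add: mult.assoc)
  qed
  moreover have "gf X Y q a b c d
      = gf (X * q powi (a - 2*b)) (Y * q powi (2*b - a)) q 0 0 (int n) (- int m)"
    using gf_translate[OF assms(1), of X Y a b c d] assms(2,3) by simp
  ultimately show ?thesis
    using gf_origin_closed_form[OF assms(1), of n "X * q powi (a - 2*b)" "Y * q powi (2*b - a)" m]
    by simp
qed

lemma prod_power_int: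
  fixes x :: "'a::field"
  assumes "x \<noteq> 0"
  shows "(\<Prod>i\<in>A. x powi f i) = x powi (\<Sum>i\<in>A. f i)"
  by (induction A rule: infinite_finite_induct) (simp_all add: power_int_add assms)

lemma prod_Icc_int_eq_prod_lessThan:
  "(\<Prod>j=1..int n. f j) = (\<Prod>j<n. f (int j + 1))"
proof -
  have "{1..int n} = (\<lambda>j. int j + 1) ` {..<n}"
  proof
    show "{1..int n} \<subseteq> (\<lambda>j. int j + 1) ` {..<n}"
    proof
      fix x assume "x \<in> {1..int n}"
      then have "x = int (nat (x - 1)) + 1" "nat (x - 1) < n" by auto
      then show "x \<in> (\<lambda>j. int j + 1) ` {..<n}" by blast
    qed
  qed auto
  moreover have "inj_on (\<lambda>j. int j + 1) {..<n}" by (simp add: inj_on_def)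
  ultimately show ?thesis by (simp add: prod.reindex)
qed

lemma double_sum_lessThan_int: "2 * (\<Sum>j<n. int j) = int n * (int n - 1)"
  by (induction n) (simp_all add: algebra_simps)

lemma qpoch_square_powers:
  fixes q :: "'a::field"
  shows "qpoch ((q^2)^k) (q^2) n = (\<Prod>j=1..int n. 1 - q powi (2 * int k + 2*j - 2))"
proof -
  have "(q^2)^k * (q^2)^j = q powi (2 * int k + 2 * (int j + 1) - 2)" for j
  proof -
    have "2 * int k + 2 * (int j + 1) - 2 = int (2 * (k + j))" by simp
    then show ?thesis by (simp only: power_int_of_nat power_mult power_add)
  qed
  then show ?thesis
    unfolding qpoch_def prod_Icc_int_eq_prod_lessThan by simp
qed

lemma prod_powi_pair_eq_qpoch:
  fixes q :: "'a::field"
  assumes "q \<noteq> 0"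
  shows "(\<Prod>j<n. q powi (a - 2*b + int j) + q powi (2*d - a - int j))
    = q powi (\<Sum>j<n. 2*d - a - int j) * qpoch (- (q powi (2*a - 2*b - 2*d))) (q^2) n"
proof -
  have "q powi (a - 2*b + int j) + q powi (2*d - a - int j)
      = q powi (2*d - a - int j) * (1 - - (q powi (2*a - 2*b - 2*d)) * (q^2)^j)" for j
  proof -
    have "a - 2*b + int j = (2*d - a - int j) + (2*a - 2*b - 2*d) + int (2*j)" by simp
    then have "q powi (a - 2*b + int j)
        = q powi (2*d - a - int j) * (q powi (2*a - 2*b - 2*d) * (q^2)^j)"
      by (simp only: power_int_add[OF disjI1[OF assms]] power_int_of_nat power_mult mult.assoc)
    then show ?thesis by (simp add: algebra_simps)
  qed
  then show ?thesis
    by (simp add: qpoch_def prod.distrib prod_power_int[OF assms])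
qed

lemma gf_eq_quotient:
  fixes X Y q :: "'a::field_char_0"
  assumes "q \<noteq> 0" and "c = a + int n" and "b = d + int m" and "qpoch (q^2) (q^2) n \<noteq> 0"
  shows "gf X Y q a b c d
    = (\<Prod>j<n. X * q powi (a - 2*b + int j) + Y * q powi (2*d - a - int j))
      * qpoch ((q^2)^Suc m) (q^2) n / (2^n * qpoch (q^2) (q^2) n)"
  using gf_closed_form[OF assms(1-3), of X Y] assms(4) by (simp add: eq_divide_eq mult.commute)

lemma gf_eq_prod_Icc:
  fixes X Y q :: "'a::field_char_0"
  assumes "q \<noteq> 0" and "c = a + int n" and "b = d + int m" and "qpoch (q^2) (q^2) n \<noteq> 0"
  shows "gf X Y q a b c d = (\<Prod>j=1..c-a. (X * q powi (j-1-2*b+a) + Y * q powi (-j+1+2*d-a))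
                          * (1 - q powi (2*(b-d)+2*j)) / (2 * (1 - q powi (2*j))))"
proof -
  have n: "c - a = int n" using assms(2) by simp
  have "(\<Prod>j=1..c-a. X * q powi (j-1-2*b+a) + Y * q powi (-j+1+2*d-a))
      = (\<Prod>j<n. X * q powi (a - 2*b + int j) + Y * q powi (2*d - a - int j))"
    unfolding n prod_Icc_int_eq_prod_lessThan by (simp add: algebra_simps)
  moreover have "(\<Prod>j=1..c-a. 1 - q powi (2*(b-d)+2*j)) = qpoch ((q^2)^Suc m) (q^2) n"
    unfolding qpoch_square_powers assms(2,3) by (simp add: algebra_simps)
  moreover have "(\<Prod>j=1..c-a. 2 * (1 - q powi (2*j))) = 2^n * qpoch (q^2) (q^2) n"
    unfolding prod.distrib using qpoch_square_powers[of q 1 n] n by simp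
  ultimately show ?thesis
    unfolding gf_eq_quotient[OF assms] prod_dividef prod.distrib by simp
qed

lemma gf_1_1_eq_qpoch_quotient:
  fixes q :: "'a::field_char_0"
  assumes "q \<noteq> 0" and "c = a + int n" and "b = d + int m" and "qpoch (q^2) (q^2) n \<noteq> 0"
  shows "gf 1 1 q a b c d =
           2 powi (a-c) * q powi (((a-c)*(a+c-1-4*d)) div 2)
           * qpoch (- (q powi (2*a-2*b-2*d))) (q^2) (nat (c-a))
           * qpoch (q powi (2*b-2*d+2)) (q^2) (nat (c-a))
           / qpoch (q^2) (q^2) (nat (c-a))"
proof -
  have "(\<Sum>j<n. 2*d - a - int j) = int n * (2*d - a) - (\<Sum>j<n. int j)"
    by (simp add: sum_subtractf)
  then have "(a-c)*(a+c-1-4*d) = 2 * (\<Sum>j<n. 2*d - a - int j)"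
    using double_sum_lessThan_int[of n] assms(2) by (simp add: algebra_simps)
  moreover have "q powi (2*b-2*d+2) = (q^2)^Suc m"
  proof -
    have "2*b-2*d+2 = int (2 * Suc m)" using assms(3) by simp
    then show ?thesis by (simp only: power_int_of_nat power_mult)
  qed
  moreover have "2 powi (a-c) = (1::'a) / 2^n"
    using assms(2) by (simp add: power_int_minus_divide)
  ultimately show ?thesis
    using gf_eq_quotient[OF assms, of 1 1] prod_powi_pair_eq_qpoch[OF assms(1)] assms(2)
    by simp
qed

theorem mainTheorem7:
  fixes X Y q :: "'a::field_char_0" and a b c d :: int
  assumes "a \<le> c" and "d \<le> b" and "q \<noteq> 0"
    and "\<forall>j\<in>{1..c-a}. 1 - q powi (2*j) \<noteq> 0"
  shows "gf X Y q a b c d =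
           (\<Prod>j=1..c-a. (X * q powi (j-1-2*b+a) + Y * q powi (-j+1+2*d-a))
                          * (1 - q powi (2*(b-d)+2*j)) / (2 * (1 - q powi (2*j))))
       \<and> gf 1 1 q a b c d =
           2 powi (a-c) * q powi (((a-c)*(a+c-1-4*d)) div 2)
           * qpoch (- (q powi (2*a-2*b-2*d))) (q^2) (nat (c-a))
           * qpoch (q powi (2*b-2*d+2)) (q^2) (nat (c-a))
           / qpoch (q^2) (q^2) (nat (c-a))"
proof -
  define n m where "n = nat (c - a)" and "m = nat (b - d)"
  have c: "c = a + int n" and b: "b = d + int m"
    using assms(1,2) by (simp_all add: n_def m_def)
  have "qpoch (q^2) (q^2) n = (\<Prod>j=1..c-a. 1 - q powi (2*j))"
    using qpoch_square_powers[of q 1 n] c by simp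
  with assms(4) have "qpoch (q^2) (q^2) n \<noteq> 0" by simp
  with gf_eq_prod_Icc[OF assms(3) c b] gf_1_1_eq_qpoch_quotient[OF assms(3) c b] show ?thesis
    by blast
qed

end
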